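(* Let $\mathcal X,\mathcal Y$ be complex Hilbert spaces and $A:\mathcal X\supset\operatorname{dom}A\to\mathcal Y$ a closed, densely defined linear operator with $\|Ax\|_{\mathcal Y}\ge c\|x\|_{\mathcal X}$ for some $c>0$ and all $x\in\operatorname{dom}A$. Let $\mathcal X_h$ be $\operatorname{dom}A$ with inner product $\langle Ax,Ay\rangle_{\mathcal Y}$, $\mathcal Y_1=\operatorname{ran}A$ with the inner product of $\mathcal Y$ (so $A:\mathcal X_h\to\mathcal Y_1$ is an isometric isomorphism), and $\mathcal Z_h=\mathcal X_h\times\mathcal X$. Let $B:\mathcal Y\supset\operatorname{dom}B\to\mathcal X$ be closed, densely defined with $A^*\subset-B$, and $B_{\mathcal Y_1}$ the restriction of $B$ to $\operatorname{dom}B\cap\mathcal Y_1$ viewed as an operator $\mathcal Y_1\to\mathcal X$. Let $\mathcal A$ on $\mathcal Z_h$ be given by $\operatorname{dom}\mathcal A=\{(z_1,z_2)\in\mathcal X_h\times\mathcal X_h: Az_1\in\operatorname{dom}B\}$, $\mathcal A(z_1,z_2)=(z_2,BAz_1)$, and define $\mathcal B_1$ on $\mathcal Y_1\times\mathcal X$ (product inner product) by $\operatorname{dom}\mathcal B_1=\operatorname{dom}B_{\mathcal Y_1}\times\mathcal X_h$, $\mathcal B_1(v,w)=(Aw,\ Bv)$; equivalently $\mathcal B_1=\operatorname{diag}(A,I)\,\mathcal A\,\operatorname{diag}(A^{-1},I)$. Let $\mathcal G_1,\mathcal G_2$ be Hilbert spaces and $\Lambda=(\Lambda_1,\Lambda_2):\operatorname{dom}A\to\mathcal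 G_1\times\mathcal G_2^*$, $\Pi=(\Pi_1,\Pi_2):\operatorname{dom}B\to\mathcal G_1^*\times\mathcal G_2$ surjective linear maps with $-\langle By,x\rangle_{\mathcal X}-\langle y,Ax\rangle_{\mathcal Y}=\langle\Pi_1y,\Lambda_1x\rangle_{\mathcal G_1^*,\mathcal G_1}-\langle\Pi_2y,\Lambda_2x\rangle_{\mathcal G_2,\mathcal G_2^*}$ for all $y\in\operatorname{dom}B$, $x\in\operatorname{dom}A$. Let $\mathcal G=\mathcal G_1\times\mathcal G_2$, $\mathcal G^*=\mathcal G_1^*\times\mathcal G_2^*$, and on $\operatorname{dom}\mathcal A$ let $\Gamma_0(z_1,z_2)=(\Lambda_1z_2,\Pi_2Az_1)$, $\Gamma_1(z_1,z_2)=(-\Pi_1Az_1,\Lambda_2z_2)$. Define on $\operatorname{dom}\mathcal B_1$ $\Xi_0(v,w)=(\Lambda_1w,\ \Pi_2v)\in\mathcal G$, $\Xi_1(v,w)=(-\Pi_1v,\ \Lambda_2w)\in\mathcal G^*$. Then $(\mathcal G,\Xi_0,\Xi_1)$ is a boundary triplet for $\mathcal B_1$, i.e. $(\Xi_0,\Xi_1):\operatorname{dom}\mathcal B_1\to\mathcal G\times\mathcal G^*$ is surjective and $\langle\mathcal B_1f,g\rangle_{\mathcal Y_1\times\mathcal X}+\langle f,\mathcal B_1g\rangle_{\mathcal Y_1\times\mathcal X}=\langle\Xi_1f,\Xi_0g\rangle_{\mathcal G^*,\mathcal G}+\langle\Xi_0f,\Xi_1g\rangle_{\mathcal G,\mathcal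 G^*}$ for all $f,g\in\operatorname{dom}\mathcal B_1$. In particular $\Xi_i=\Gamma_i\operatorname{diag}(A^{-1},I)$ for $i=0,1$.
   Context: All Hilbert spaces are complex; $\mathcal H^*$ denotes the anti-dual of a Hilbert space $\mathcal H$, $\langle\cdot,\cdot\rangle_{\mathcal H^*,\mathcal H}$ the duality pairing and $\langle h,\phi\rangle_{\mathcal H,\mathcal H^*}:=\overline{\langle\phi,h\rangle_{\mathcal H^*,\mathcal H}}$. *)

theory Defs
  imports "HOL-Analysis.Analysis"
begin

text \<open>A complex Hilbert space is modelled on a type with addition (ab_group_add)
together with a complex scalar multiplication and a complex inner product,
which is linear in the FIRST argument and conjugate-linear in the second.\<close>

record 'a hilb =
  hsc :: "complex \<Rightarrow> 'a \<Rightarrow> 'a"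
  hip :: "'a \<Rightarrow> 'a \<Rightarrow> complex"

definition hnorm :: "('a, 'b) hilb_scheme \<Rightarrow> 'a \<Rightarrow> real" where
  "hnorm H x = sqrt (Re (hip H x x))"

definition complex_hilbert :: "('a::ab_group_add, 'b) hilb_scheme \<Rightarrow> bool" where
  "complex_hilbert H \<longleftrightarrow>
     (\<forall>a b x. hsc H (a + b) x = hsc H a x + hsc H b x) \<and>
     (\<forall>a x y. hsc H a (x + y) = hsc H a x + hsc H a y) \<and>
     (\<forall>a b x. hsc H (a * b) x = hsc H a (hsc H b x)) \<and>
     (\<forall>x. hsc H 1 x = x) \<and>
     (\<forall>x y z. hip H (x + y) z = hip H x z + hip H y z) \<and>
     (\<forall>c x y. hip H (hsc H c x) y = c * hip H x y) \<and>
     (\<forall>x y. hip H y x = cnj (hip H x y)) \<and>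
     (\<forall>x. x \<noteq> 0 \<longrightarrow> Re (hip H x x) > 0) \<and>
     (\<forall>s. (\<forall>e>0. \<exists>N. \<forall>m\<ge>N. \<forall>n\<ge>N. hnorm H (s m - s n) < e) \<longrightarrow>
          (\<exists>l. (\<lambda>n. hnorm H (s n - l)) \<longlonglongrightarrow> 0))"

definition hsubspace :: "('a::ab_group_add, 'b) hilb_scheme \<Rightarrow> 'a set \<Rightarrow> bool" where
  "hsubspace H D \<longleftrightarrow> 0 \<in> D \<and> (\<forall>x\<in>D. \<forall>y\<in>D. x + y \<in> D) \<and>
     (\<forall>c. \<forall>x\<in>D. hsc H c x \<in> D)"

definition hlinear_on ::
  "('a::ab_group_add, 'b) hilb_scheme \<Rightarrow> ('c::ab_group_add, 'd) hilb_scheme \<Rightarrow> 'a set \<Rightarrow> ('a \<Rightarrow> 'c) \<Rightarrow> bool" where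
  "hlinear_on H K D f \<longleftrightarrow> hsubspace H D \<and>
     (\<forall>x\<in>D. \<forall>y\<in>D. f (x + y) = f x + f y) \<and>
     (\<forall>c. \<forall>x\<in>D. f (hsc H c x) = hsc K c (f x))"

definition hdense :: "('a::ab_group_add, 'b) hilb_scheme \<Rightarrow> 'a set \<Rightarrow> bool" where
  "hdense H D \<longleftrightarrow> (\<forall>x. \<forall>e>0. \<exists>d\<in>D. hnorm H (x - d) < e)"

definition hclosed_op ::
  "('a::ab_group_add, 'b) hilb_scheme \<Rightarrow> ('c::ab_group_add, 'd) hilb_scheme \<Rightarrow> 'a set \<Rightarrow> ('a \<Rightarrow> 'c) \<Rightarrow> bool" where
  "hclosed_op H K D f \<longleftrightarrow>
     (\<forall>s x y. (\<forall>n. s n \<in> D) \<longrightarrow> (\<lambda>n. hnorm H (s n - x)) \<longlonglongrightarrow> 0 \<longrightarrow>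
        (\<lambda>n. hnorm K (f (s n) - y)) \<longlonglongrightarrow> 0 \<longrightarrow> x \<in> D \<and> f x = y)"

definition adj_dom ::
  "('a::ab_group_add, 'b) hilb_scheme \<Rightarrow> ('c::ab_group_add, 'd) hilb_scheme \<Rightarrow> 'a set \<Rightarrow> ('a \<Rightarrow> 'c) \<Rightarrow> 'c set" where
  "adj_dom H K D A = {y. \<exists>w. \<forall>x\<in>D. hip K (A x) y = hip H x w}"

definition adj_op ::
  "('a::ab_group_add, 'b) hilb_scheme \<Rightarrow> ('c::ab_group_add, 'd) hilb_scheme \<Rightarrow> 'a set \<Rightarrow> ('a \<Rightarrow> 'c) \<Rightarrow> 'c \<Rightarrow> 'a" where
  "adj_op H K D A y = (THE w. \<forall>x\<in>D. hip K (A x) y = hip H x w)"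

definition adj_subset_neg ::
  "('a::ab_group_add, 'b) hilb_scheme \<Rightarrow> ('c::ab_group_add, 'd) hilb_scheme \<Rightarrow> 'a set \<Rightarrow> ('a \<Rightarrow> 'c)
    \<Rightarrow> 'c set \<Rightarrow> ('c \<Rightarrow> 'a) \<Rightarrow> bool" where
  "adj_subset_neg H K DA A DB B \<longleftrightarrow>
     adj_dom H K DA A \<subseteq> DB \<and> (\<forall>y\<in>adj_dom H K DA A. B y = - adj_op H K DA A y)"

text \<open>The anti-dual of H: bounded conjugate-linear functionals on H, with the vector
structure (\<phi> + \<psi>)(h) = \<phi> h + \<psi> h, (c \<phi>)(h) = c * \<phi> h.  The pairing
\<langle>\<phi>, h\<rangle>_{H*,H} is \<phi> h, and \<langle>h, \<phi>\<rangle>_{H,H*} = cnj (\<phi> h).\<close>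
definition antidual :: "('a::ab_group_add, 'b) hilb_scheme \<Rightarrow> ('a \<Rightarrow> complex) set" where
  "antidual H = {\<phi>. (\<forall>x y. \<phi> (x + y) = \<phi> x + \<phi> y) \<and>
                    (\<forall>c x. \<phi> (hsc H c x) = cnj c * \<phi> x) \<and>
                    (\<exists>C. \<forall>x. cmod (\<phi> x) \<le> C * hnorm H x)}"

definition hlinear_to_antidual ::
  "('a::ab_group_add, 'b) hilb_scheme \<Rightarrow> 'a set \<Rightarrow> ('a \<Rightarrow> 'c \<Rightarrow> complex) \<Rightarrow> bool" where
  "hlinear_to_antidual H D f \<longleftrightarrow> hsubspace H D \<and>
     (\<forall>x\<in>D. \<forall>y\<in>D. f (x + y) = (\<lambda>g. f x g + f y g)) \<and>
     (\<forall>c. \<forall>x\<in>D. f (hsc H c x) = (\<lambda>g. c * f x g))"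

definition pair_dual :: "('g1 \<Rightarrow> complex) \<times> ('g2 \<Rightarrow> complex) \<Rightarrow> 'g1 \<times> 'g2 \<Rightarrow> complex" where
  "pair_dual \<phi> g = fst \<phi> (fst g) + snd \<phi> (snd g)"

definition domB1 :: "'x set \<Rightarrow> ('x \<Rightarrow> 'y) \<Rightarrow> 'y set \<Rightarrow> ('y \<times> 'x) set" where
  "domB1 DA A DB = (DB \<inter> A ` DA) \<times> DA"

definition opB1 :: "('x \<Rightarrow> 'y) \<Rightarrow> ('y \<Rightarrow> 'x) \<Rightarrow> 'y \<times> 'x \<Rightarrow> 'y \<times> 'x" where
  "opB1 A B f = (A (snd f), B (fst f))"

definition domAA :: "'x set \<Rightarrow> ('x \<Rightarrow> 'y) \<Rightarrow> 'y set \<Rightarrow> ('x \<times> 'x) set" where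
  "domAA DA A DB = {(z1, z2). z1 \<in> DA \<and> z2 \<in> DA \<and> A z1 \<in> DB}"

definition Gamma0 where
  "Gamma0 A Lam1 Pi2 z = (Lam1 (snd z), Pi2 (A (fst z)))"

definition Gamma1 where
  "Gamma1 A Pi1 Lam2 z = ((\<lambda>g. - Pi1 (A (fst z)) g), Lam2 (snd z))"

definition Xi0 where
  "Xi0 Lam1 Pi2 f = (Lam1 (snd f), Pi2 (fst f))"

definition Xi1 where
  "Xi1 Pi1 Lam2 f = ((\<lambda>g. - Pi1 (fst f) g), Lam2 (snd f))"

end

theory Submission
  imports Defs
begin

text \<open>Since A is closed and bounded below, ran A is complete, so every v in dom B splits as
  v = A x0 + u with u orthogonal to ran A. Then u lies in dom A* \<subseteq> dom B with B u = - A* u = 0,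
  and Green's identity for (A, B) reduces to \<Pi>1 u (\<Lambda>1 x) = cnj (\<Lambda>2 x (\<Pi>2 u)) for all x in dom A;
  as \<Lambda> is onto, \<Pi> u = 0. So \<Pi> already maps dom B \<inter> ran A onto G1* \<times> G2, which makes
  (\<Xi>0, \<Xi>1) surjective. The abstract Green identity for \<B>1 is Green's identity for (A, B)
  applied to the pairs (v, w') and (v', w).\<close>

abbreviation hcauchy :: "('a::ab_group_add, 'b) hilb_scheme \<Rightarrow> (nat \<Rightarrow> 'a) \<Rightarrow> bool" where
  "hcauchy H s \<equiv> \<forall>e>0. \<exists>N. \<forall>m\<ge>N. \<forall>n\<ge>N. hnorm H (s m - s n) < e"

abbreviation hlimit :: "('a::ab_group_add, 'b) hilb_scheme \<Rightarrow> (nat \<Rightarrow> 'a) \<Rightarrow> 'a \<Rightarrow> bool" where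
  "hlimit H s l \<equiv> (\<lambda>n. hnorm H (s n - l)) \<longlonglongrightarrow> 0"

locale complex_hilbert_space =
  fixes H :: "('a::ab_group_add, 'b) hilb_scheme"
  assumes complex_hilbert: "complex_hilbert H"
begin

lemma hsc_add_left: "hsc H (a + b) x = hsc H a x + hsc H b x"
  using complex_hilbert unfolding complex_hilbert_def by meson

lemma hsc_add_right: "hsc H a (x + y) = hsc H a x + hsc H a y"
  using complex_hilbert unfolding complex_hilbert_def by meson

lemma hsc_mult: "hsc H (a * b) x = hsc H a (hsc H b x)"
  using complex_hilbert unfolding complex_hilbert_def by meson

lemma hsc_one [simp]: "hsc H 1 x = x"
  using complex_hilbert unfolding complex_hilbert_def by meson

lemma hip_add_left: "hip H (x + y) z = hip H x z + hip H y z"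
  using complex_hilbert unfolding complex_hilbert_def by meson

lemma hip_scale_left: "hip H (hsc H c x) y = c * hip H x y"
  using complex_hilbert unfolding complex_hilbert_def by meson

lemma hip_commute: "hip H y x = cnj (hip H x y)"
  using complex_hilbert unfolding complex_hilbert_def by meson

lemma hip_self_pos: "x \<noteq> 0 \<Longrightarrow> Re (hip H x x) > 0"
  using complex_hilbert unfolding complex_hilbert_def by meson

lemma hcomplete: "hcauchy H s \<Longrightarrow> \<exists>l. hlimit H s l"
  using complex_hilbert unfolding complex_hilbert_def by meson

lemma hsc_minus_one [simp]: "hsc H (- 1) x = - x"
proof -
  have "hsc H (- 1) x + x = 0"
    using hsc_add_left[of "- 1" 1 x] hsc_add_left[of 0 0 x] by simp
  then show ?thesis by (simp add: eq_neg_iff_add_eq_0)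
qed

lemma hsc_diff_right: "hsc H a (x - y) = hsc H a x - hsc H a y"
proof -
  have "hsc H a (x - y) + hsc H a y = hsc H a x"
    by (metis diff_add_cancel hsc_add_right)
  then show ?thesis by (simp add: eq_diff_eq)
qed

lemma hip_zero_left [simp]: "hip H 0 y = 0"
  using hip_add_left[of 0 0 y] by simp

lemma hip_diff_left: "hip H (x - y) z = hip H x z - hip H y z"
  by (metis diff_add_cancel eq_diff_eq hip_add_left)

lemma hip_add_right: "hip H x (y + z) = hip H x y + hip H x z"
  by (metis hip_commute hip_add_left complex_cnj_add)

lemma hip_scale_right: "hip H x (hsc H c y) = cnj c * hip H x y"
  by (metis hip_commute hip_scale_left complex_cnj_mult)

lemma hip_zero_right [simp]: "hip H x 0 = 0"
  by (metis hip_commute hip_zero_left complex_cnj_zero)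

lemma hip_diff_right: "hip H x (y - z) = hip H x y - hip H x z"
  by (metis hip_commute hip_diff_left complex_cnj_diff)

lemma hip_self_nonneg: "0 \<le> Re (hip H x x)"
  using hip_self_pos[of x] by (cases "x = 0") (simp_all add: less_imp_le)

lemma hnorm_nonneg: "0 \<le> hnorm H x"
  by (simp add: hnorm_def hip_self_nonneg)

lemma hnorm_sq: "(hnorm H x)\<^sup>2 = Re (hip H x x)"
  by (simp add: hnorm_def hip_self_nonneg)

lemma hnorm_eq_0_iff [simp]: "hnorm H x = 0 \<longleftrightarrow> x = 0"
  using hip_self_pos[of x] by (cases "x = 0") (auto simp: hnorm_def)

lemma hnorm_sq_add: "(hnorm H (x + y))\<^sup>2 = (hnorm H x)\<^sup>2 + (hnorm H y)\<^sup>2 + 2 * Re (hip H x y)"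
  by (simp add: hnorm_sq hip_add_left hip_add_right hip_commute[of y x])

lemma hnorm_sq_diff: "(hnorm H (x - y))\<^sup>2 = (hnorm H x)\<^sup>2 + (hnorm H y)\<^sup>2 - 2 * Re (hip H x y)"
  by (simp add: hnorm_sq hip_diff_left hip_diff_right hip_commute[of y x])

lemma hnorm_scale: "hnorm H (hsc H c x) = cmod c * hnorm H x"
proof -
  have "hip H (hsc H c x) (hsc H c x) = (c * cnj c) * hip H x x"
    by (simp add: hip_scale_left hip_scale_right)
  also have "c * cnj c = of_real ((cmod c)\<^sup>2)"
    by (simp only: complex_norm_square)
  finally show ?thesis by (simp add: hnorm_def real_sqrt_mult)
qed

lemma parallelogram: "(hnorm H (x + y))\<^sup>2 + (hnorm H (x - y))\<^sup>2 = 2 * (hnorm H x)\<^sup>2 + 2 * (hnorm H y)\<^sup>2"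
  by (simp add: hnorm_sq_add hnorm_sq_diff)

lemma hnorm_sq_diff_component:
  assumes "w \<noteq> 0"
  shows "(hnorm H (u - hsc H (hip H u w / of_real ((hnorm H w)\<^sup>2)) w))\<^sup>2
           = (hnorm H u)\<^sup>2 - (cmod (hip H u w))\<^sup>2 / (hnorm H w)\<^sup>2"
proof -
  define r where "r = (hnorm H w)\<^sup>2"
  define h where "h = hip H u w"
  define t where "t = h / of_real r"
  have r: "r > 0" using assms by (simp add: r_def)
  have "(hnorm H (u - hsc H t w))\<^sup>2 = (hnorm H u)\<^sup>2 + (cmod t)\<^sup>2 * r - 2 * Re (cnj t * h)"
    by (simp add: hnorm_sq_diff hnorm_scale power_mult_distrib hip_scale_right r_def h_def)
  also have "cnj t * h = of_real ((cmod h)\<^sup>2 / r)"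
  proof -
    have "cnj t * h = (h * cnj h) / of_real r" by (simp add: t_def mult.commute)
    also have "\<dots> = of_real ((cmod h)\<^sup>2) / of_real r" by (simp only: complex_norm_square)
    finally show ?thesis by simp
  qed
  also have "(cmod t)\<^sup>2 * r = (cmod h)\<^sup>2 / r"
    using r by (simp add: t_def norm_divide power2_eq_square)
  finally show ?thesis by (simp add: t_def r_def h_def)
qed

lemma cauchy_schwarz: "cmod (hip H x y) \<le> hnorm H x * hnorm H y"
proof (cases "y = 0")
  case False
  have "(cmod (hip H x y))\<^sup>2 / (hnorm H y)\<^sup>2 \<le> (hnorm H x)\<^sup>2"
    using hnorm_sq_diff_component[OF False, of x] by (metis diff_ge_0_iff_ge zero_le_power2)
  then have "(cmod (hip H x y))\<^sup>2 \<le> (hnorm H x * hnorm H y)\<^sup>2"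
    using False by (simp add: divide_le_eq power_mult_distrib)
  then show ?thesis
    by (meson hnorm_nonneg mult_nonneg_nonneg power2_le_imp_le)
qed (simp add: hnorm_nonneg)

lemma hnorm_triangle: "hnorm H (x + y) \<le> hnorm H x + hnorm H y"
proof -
  have "Re (hip H x y) \<le> hnorm H x * hnorm H y"
    using cauchy_schwarz[of x y] complex_Re_le_cmod order_trans by blast
  then have "(hnorm H (x + y))\<^sup>2 \<le> (hnorm H x + hnorm H y)\<^sup>2"
    by (simp add: hnorm_sq_add power2_sum)
  then show ?thesis
    by (meson add_nonneg_nonneg hnorm_nonneg power2_le_imp_le)
qed

lemma orthogonal_if_best_approximation:
  assumes "\<And>t. hnorm H u \<le> hnorm H (u - hsc H t w)"
  shows "hip H w u = 0"
proof (cases "w = 0")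
  case False
  have "(hnorm H u)\<^sup>2 \<le> (hnorm H u)\<^sup>2 - (cmod (hip H u w))\<^sup>2 / (hnorm H w)\<^sup>2"
    unfolding hnorm_sq_diff_component[OF False, symmetric]
    using assms hnorm_nonneg by (simp add: power_mono)
  then have "hip H u w = 0"
    using False by (simp add: divide_le_0_iff)
  then show ?thesis by (simp add: hip_commute[of u])
qed simp

lemma orthogonal_to_dense_eq_0:
  assumes "hdense H D" and "\<forall>x\<in>D. hip H x w = 0"
  shows "w = 0"
proof (rule ccontr)
  assume "w \<noteq> 0"
  then obtain d where d: "d \<in> D" "hnorm H (w - d) < hnorm H w"
    using assms(1) hnorm_nonneg unfolding hdense_def
    by (metis hnorm_eq_0_iff order_le_less)
  have "hip H w w = hip H (w - d) w"
    using assms(2) d(1) by (simp add: hip_diff_left)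
  then have "(hnorm H w)\<^sup>2 \<le> hnorm H (w - d) * hnorm H w"
    using cauchy_schwarz[of "w - d" w] complex_Re_le_cmod[of "hip H w w"]
    by (simp add: hnorm_sq)
  also have "\<dots> < (hnorm H w)\<^sup>2"
    using d(2) \<open>w \<noteq> 0\<close> hnorm_nonneg[of w]
    by (simp add: power2_eq_square order_le_less)
  finally show False by simp
qed

lemma hip_antidual: "(\<lambda>x. hip H p x) \<in> antidual H"
  unfolding antidual_def using hip_add_right hip_scale_right cauchy_schwarz
  by (auto intro!: exI[of _ "hnorm H p"])

lemma hsubspace_diff:
  assumes "hsubspace H S" "x \<in> S" "y \<in> S"
  shows "x - y \<in> S"
  using assms hsc_minus_one unfolding hsubspace_def by (metis diff_conv_add_uminus)

lemma best_approximation_pair_bound: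
  assumes S: "hsubspace H S" "a \<in> S" "b \<in> S"
    and D: "\<forall>s\<in>S. D \<le> (hnorm H (v - s))\<^sup>2"
  shows "(hnorm H (a - b))\<^sup>2 \<le> 2 * (hnorm H (v - a))\<^sup>2 + 2 * (hnorm H (v - b))\<^sup>2 - 4 * D"
proof -
  define m where "m = hsc H (1/2) (a + b)"
  have "m \<in> S" using S unfolding hsubspace_def m_def by blast
  have "(v - b) + (v - a) = hsc H 2 (v - m)"
    using hsc_add_left[of 1 1 v]
    by (simp add: m_def hsc_diff_right algebra_simps flip: hsc_mult)
  then have "(hnorm H ((v - b) + (v - a)))\<^sup>2 = 4 * (hnorm H (v - m))\<^sup>2"
    by (simp add: hnorm_scale power_mult_distrib)
  moreover have "D \<le> (hnorm H (v - m))\<^sup>2" using D \<open>m \<in> S\<close> by blast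
  ultimately show ?thesis
    using parallelogram[of "v - b" "v - a"] by simp
qed

lemma hcauchy_if_sq_bound:
  assumes bound: "\<And>m n. (hnorm H (s m - s n))\<^sup>2 \<le> e m + e n" and e: "e \<longlonglongrightarrow> 0"
  shows "hcauchy H s"
proof (intro allI impI)
  fix \<epsilon> :: real assume "\<epsilon> > 0"
  then obtain N where N: "\<forall>n\<ge>N. norm (e n) < \<epsilon>\<^sup>2 / 2"
    using LIMSEQ_D[OF e, of "\<epsilon>\<^sup>2 / 2"] by auto
  show "\<exists>N. \<forall>m\<ge>N. \<forall>n\<ge>N. hnorm H (s m - s n) < \<epsilon>"
  proof (intro exI allI impI)
    fix m n assume "m \<ge> N" "n \<ge> N"
    then have "\<bar>e m\<bar> < \<epsilon>\<^sup>2 / 2" "\<bar>e n\<bar> < \<epsilon>\<^sup>2 / 2"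
      using N by auto
    then have "(hnorm H (s m - s n))\<^sup>2 < \<epsilon>\<^sup>2"
      using bound[of m n] by linarith
    then show "hnorm H (s m - s n) < \<epsilon>"
      using \<open>\<epsilon> > 0\<close> by (simp add: power_less_imp_less_base)
  qed
qed

lemma best_approximation_exists:
  assumes S: "hsubspace H S"
    and S_complete: "\<And>s. \<forall>n. s n \<in> S \<Longrightarrow> hcauchy H s \<Longrightarrow> \<exists>l\<in>S. hlimit H s l"
  shows "\<exists>p\<in>S. \<forall>s\<in>S. hnorm H (v - p) \<le> hnorm H (v - s)"
proof -
  define D where "D = Inf ((\<lambda>s. (hnorm H (v - s))\<^sup>2) ` S)"
  have "0 \<in> S" using S unfolding hsubspace_def by blast
  have D_le: "\<forall>s\<in>S. D \<le> (hnorm H (v - s))\<^sup>2"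
    unfolding D_def by (auto intro!: cInf_lower bdd_belowI[of _ 0])
  have "\<exists>s\<in>S. (hnorm H (v - s))\<^sup>2 < D + inverse (real (Suc n))" for n
    using cInf_lessD[of "(\<lambda>s. (hnorm H (v - s))\<^sup>2) ` S" "D + inverse (real (Suc n))"] \<open>0 \<in> S\<close>
    by (auto simp: D_def)
  then obtain s where s_S: "\<And>n. s n \<in> S"
    and s_min: "\<And>n. (hnorm H (v - s n))\<^sup>2 < D + inverse (real (Suc n))"
    by metis
  have "hcauchy H s"
  proof (rule hcauchy_if_sq_bound)
    show "(hnorm H (s m - s n))\<^sup>2 \<le> 2 * inverse (real (Suc m)) + 2 * inverse (real (Suc n))" for m n
      using best_approximation_pair_bound[OF S s_S s_S D_le, of m n] s_min[of m] s_min[of n] by simp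
    show "(\<lambda>n. 2 * inverse (real (Suc n))) \<longlonglongrightarrow> 0"
      using tendsto_mult_right_zero[OF LIMSEQ_inverse_real_of_nat] by simp
  qed
  then obtain p where "p \<in> S" and p: "hlimit H s p"
    using S_complete s_S by blast
  have "hnorm H (v - p) \<le> sqrt (D + inverse (real (Suc n))) + hnorm H (s n - p)" for n
  proof -
    have "hnorm H (v - p) \<le> hnorm H (v - s n) + hnorm H (s n - p)"
      using hnorm_triangle[of "v - s n" "s n - p"] by simp
    moreover have "hnorm H (v - s n) \<le> sqrt (D + inverse (real (Suc n)))"
      using s_min[of n] hnorm_nonneg by (metis less_imp_le real_le_rsqrt)
    ultimately show ?thesis by linarith
  qed
  moreover have "(\<lambda>n. sqrt (D + inverse (real (Suc n))) + hnorm H (s n - p)) \<longlonglongrightarrow> sqrt (D + 0) + 0"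
    by (intro tendsto_intros LIMSEQ_inverse_real_of_nat p)
  ultimately have "hnorm H (v - p) \<le> sqrt D"
    by (intro LIMSEQ_le_const) auto
  moreover have "sqrt D \<le> hnorm H (v - s')" if "s' \<in> S" for s'
    using real_sqrt_le_mono[OF D_le[rule_format, OF that]] by (simp add: hnorm_nonneg)
  ultimately have "\<forall>s'\<in>S. hnorm H (v - p) \<le> hnorm H (v - s')"
    by (meson order_trans)
  then show ?thesis using \<open>p \<in> S\<close> by blast
qed

lemma projection_exists:
  assumes S: "hsubspace H S"
    and S_complete: "\<And>s. \<forall>n. s n \<in> S \<Longrightarrow> hcauchy H s \<Longrightarrow> \<exists>l\<in>S. hlimit H s l"
  shows "\<exists>p\<in>S. \<forall>s\<in>S. hip H s (v - p) = 0"
proof -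
  obtain p where "p \<in> S" and p: "\<forall>s\<in>S. hnorm H (v - p) \<le> hnorm H (v - s)"
    using best_approximation_exists[OF assms] by blast
  have "hip H s (v - p) = 0" if "s \<in> S" for s
  proof (rule orthogonal_if_best_approximation)
    fix t
    have "p + hsc H t s \<in> S" using S \<open>p \<in> S\<close> that unfolding hsubspace_def by blast
    then show "hnorm H (v - p) \<le> hnorm H (v - p - hsc H t s)"
      using p by (simp add: diff_diff_eq)
  qed
  then show ?thesis using \<open>p \<in> S\<close> by blast
qed

end

lemma antidual_zero: "(\<lambda>_. 0) \<in> antidual H"
  unfolding antidual_def by (auto intro: exI[of _ 0])

lemma antidual_uminus: "\<phi> \<in> antidual H \<Longrightarrow> (\<lambda>x. - \<phi> x) \<in> antidual H"
  unfolding antidual_def by auto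

lemma hsubspace_image:
  assumes "hlinear_on H K D f"
  shows "hsubspace K (f ` D)"
proof -
  have D: "hsubspace H D" and f_add: "\<forall>x\<in>D. \<forall>y\<in>D. f (x + y) = f x + f y"
    and f_scale: "\<forall>c. \<forall>x\<in>D. f (hsc H c x) = hsc K c (f x)"
    using assms unfolding hlinear_on_def by blast+
  have "0 \<in> D" using D unfolding hsubspace_def by blast
  then have "f 0 = 0" using f_add by (metis add.right_neutral add_cancel_right_right)
  show ?thesis unfolding hsubspace_def
  proof (intro conjI ballI allI)
    show "0 \<in> f ` D" using \<open>0 \<in> D\<close> \<open>f 0 = 0\<close> by (metis image_eqI)
  next
    fix a b assume "a \<in> f ` D" "b \<in> f ` D"
    then obtain x y where "x \<in> D" "y \<in> D" "a = f x" "b = f y" by blast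
    moreover have "x + y \<in> D" using D \<open>x \<in> D\<close> \<open>y \<in> D\<close> unfolding hsubspace_def by blast
    ultimately show "a + b \<in> f ` D" using f_add by (simp add: rev_image_eqI)
  next
    fix c a assume "a \<in> f ` D"
    then obtain x where "x \<in> D" "a = f x" by blast
    moreover have "hsc H c x \<in> D" using D \<open>x \<in> D\<close> unfolding hsubspace_def by blast
    ultimately show "hsc K c a \<in> f ` D" using f_scale by (simp add: rev_image_eqI)
  qed
qed

lemma hlinear_on_diff:
  assumes H: "complex_hilbert_space H" and K: "complex_hilbert_space K"
    and f: "hlinear_on H K D f" and "x \<in> D" "y \<in> D"
  shows "x - y \<in> D" and "f (x - y) = f x - f y"
proof -
  have "hsc H (- 1) y \<in> D" "f (hsc H (- 1) y) = hsc K (- 1) (f y)"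
    using f \<open>y \<in> D\<close> unfolding hlinear_on_def hsubspace_def by blast+
  then show "x - y \<in> D" "f (x - y) = f x - f y"
    using f \<open>x \<in> D\<close> complex_hilbert_space.hsc_minus_one[OF H] complex_hilbert_space.hsc_minus_one[OF K]
    unfolding hlinear_on_def hsubspace_def by (metis diff_conv_add_uminus)+
qed

lemma range_complete_if_closed_bounded_below:
  assumes X: "complex_hilbert_space X" and Y: "complex_hilbert_space Y"
    and A_lin: "hlinear_on X Y D A" and A_closed: "hclosed_op X Y D A"
    and A_below: "\<exists>c>0. \<forall>x\<in>D. hnorm Y (A x) \<ge> c * hnorm X x"
    and s: "\<forall>n. s n \<in> A ` D" "hcauchy Y s"
  shows "\<exists>l\<in>A ` D. hlimit Y s l"
proof -
  obtain c where c: "c > 0" "\<forall>x\<in>D. c * hnorm X x \<le> hnorm Y (A x)"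
    using A_below by blast
  define xs where "xs n = inv_into D A (s n)" for n
  have xs: "\<And>n. xs n \<in> D" "\<And>n. s n = A (xs n)"
    using s(1) by (simp_all add: xs_def inv_into_into f_inv_into_f)
  have "hcauchy X xs"
  proof (intro allI impI)
    fix e :: real assume "e > 0"
    then obtain N where N: "\<forall>m\<ge>N. \<forall>n\<ge>N. hnorm Y (s m - s n) < c * e"
      using s(2) c(1) by (meson mult_pos_pos)
    show "\<exists>N. \<forall>m\<ge>N. \<forall>n\<ge>N. hnorm X (xs m - xs n) < e"
    proof (intro exI allI impI)
      fix m n assume "m \<ge> N" "n \<ge> N"
      have "c * hnorm X (xs m - xs n) \<le> hnorm Y (s m - s n)"
        using c(2) hlinear_on_diff[OF X Y A_lin xs(1) xs(1)] xs(2) by metis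
      then show "hnorm X (xs m - xs n) < e"
        using N \<open>m \<ge> N\<close> \<open>n \<ge> N\<close> c(1) by (meson le_less_trans mult_less_cancel_left_pos)
    qed
  qed
  then obtain x0 where "hlimit X xs x0"
    using complex_hilbert_space.hcomplete[OF X] by blast
  moreover obtain y0 where "hlimit Y s y0"
    using complex_hilbert_space.hcomplete[OF Y] s(2) by blast
  moreover have "hlimit Y (\<lambda>n. A (xs n)) y0"
    using \<open>hlimit Y s y0\<close> by (simp add: xs(2))
  ultimately have "x0 \<in> D \<and> A x0 = y0"
    using A_closed xs(1) unfolding hclosed_op_def by blast
  then show ?thesis using \<open>hlimit Y s y0\<close> by blast
qed

lemma range_orthogonal_decomposition:
  assumes X: "complex_hilbert_space X" and Y: "complex_hilbert_space Y"
    and A_lin: "hlinear_on X Y D A" and A_closed: "hclosed_op X Y D A"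
    and A_below: "\<exists>c>0. \<forall>x\<in>D. hnorm Y (A x) \<ge> c * hnorm X x"
  shows "\<exists>x0\<in>D. \<forall>x\<in>D. hip Y (A x) (v - A x0) = 0"
  using complex_hilbert_space.projection_exists[OF Y hsubspace_image[OF A_lin]
      range_complete_if_closed_bounded_below[OF assms]]
  by blast

lemma orthogonal_to_range_in_ker:
  assumes X: "complex_hilbert_space X" and A_dense: "hdense X DA"
    and AB_adj: "adj_subset_neg X Y DA A DB B"
    and u: "\<forall>x\<in>DA. hip Y (A x) u = 0"
  shows "u \<in> DB" and "B u = 0"
proof -
  have u_0: "\<forall>x\<in>DA. hip Y (A x) u = hip X x 0"
    using u complex_hilbert_space.hip_zero_right[OF X] by simp
  then have u_adj: "u \<in> adj_dom X Y DA A"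
    unfolding adj_dom_def by blast
  have "adj_op X Y DA A u = 0"
    unfolding adj_op_def
  proof (rule the_equality)
    show "\<forall>x\<in>DA. hip Y (A x) u = hip X x 0" by (fact u_0)
  next
    fix w assume "\<forall>x\<in>DA. hip Y (A x) u = hip X x w"
    then show "w = 0"
      using u complex_hilbert_space.orthogonal_to_dense_eq_0[OF X A_dense] by simp
  qed
  then show "u \<in> DB" "B u = 0"
    using AB_adj u_adj unfolding adj_subset_neg_def by auto
qed

lemma annihilator_of_boundary_values:
  fixes Lam1 :: "'x \<Rightarrow> 'g1::zero"
  assumes G2: "complex_hilbert_space G2"
    and Lam_surj: "(\<lambda>x. (Lam1 x, Lam2 x)) ` DA = UNIV \<times> antidual G2"
    and pairing: "\<forall>x\<in>DA. \<phi> (Lam1 x) = cnj (Lam2 x g)"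
  shows "\<phi> = (\<lambda>_. 0)" and "g = 0"
proof -
  show "\<phi> = (\<lambda>_. 0)"
  proof
    fix a
    have "(a, \<lambda>_. 0) \<in> (\<lambda>x. (Lam1 x, Lam2 x)) ` DA"
      using Lam_surj antidual_zero by blast
    then obtain x where "x \<in> DA" "Lam1 x = a" "Lam2 x = (\<lambda>_. 0)" by auto
    then show "\<phi> a = 0" using pairing by force
  qed
  have "(0, hip G2 g) \<in> (\<lambda>x. (Lam1 x, Lam2 x)) ` DA"
    using Lam_surj complex_hilbert_space.hip_antidual[OF G2] by blast
  then have "hip G2 g g = 0"
    using pairing \<open>\<phi> = (\<lambda>_. 0)\<close> by force
  then show "g = 0"
    using complex_hilbert_space.hip_self_pos[OF G2, of g] by fastforce
qed

locale green_operator_pair =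
  fixes X :: "('x::ab_group_add, 'xm) hilb_scheme" and Y :: "('y::ab_group_add, 'ym) hilb_scheme"
    and G1 :: "('g1::ab_group_add, 'g1m) hilb_scheme" and G2 :: "('g2::ab_group_add, 'g2m) hilb_scheme"
    and DA :: "'x set" and A :: "'x \<Rightarrow> 'y" and DB :: "'y set" and B :: "'y \<Rightarrow> 'x"
    and Lam1 :: "'x \<Rightarrow> 'g1" and Lam2 :: "'x \<Rightarrow> 'g2 \<Rightarrow> complex"
    and Pi1 :: "'y \<Rightarrow> 'g1 \<Rightarrow> complex" and Pi2 :: "'y \<Rightarrow> 'g2"
  assumes X_hilbert: "complex_hilbert X" and Y_hilbert: "complex_hilbert Y"
    and G2_hilbert: "complex_hilbert G2"
    and A_lin: "hlinear_on X Y DA A" and A_closed: "hclosed_op X Y DA A"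
    and A_dense: "hdense X DA"
    and A_below: "\<exists>c>0. \<forall>x\<in>DA. hnorm Y (A x) \<ge> c * hnorm X x"
    and B_lin: "hlinear_on Y X DB B"
    and AB_adj: "adj_subset_neg X Y DA A DB B"
    and Lam2_into: "Lam2 ` DA \<subseteq> antidual G2"
    and Lam_surj: "(\<lambda>x. (Lam1 x, Lam2 x)) ` DA = UNIV \<times> antidual G2"
    and Pi1_lin: "hlinear_to_antidual Y DB Pi1"
    and Pi1_into: "Pi1 ` DB \<subseteq> antidual G1"
    and Pi2_lin: "hlinear_on Y G2 DB Pi2"
    and Pi_surj: "(\<lambda>y. (Pi1 y, Pi2 y)) ` DB = antidual G1 \<times> UNIV"
    and green: "\<And>y x. y \<in> DB \<Longrightarrow> x \<in> DA \<Longrightarrow>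
       - hip X (B y) x - hip Y y (A x) = Pi1 y (Lam1 x) - cnj (Lam2 x (Pi2 y))"
begin

sublocale X: complex_hilbert_space X by unfold_locales (fact X_hilbert)
sublocale Y: complex_hilbert_space Y by unfold_locales (fact Y_hilbert)
sublocale G2: complex_hilbert_space G2 by unfold_locales (fact G2_hilbert)

lemma boundary_values_attained_on_range:
  assumes "v \<in> DB"
  shows "\<exists>x\<in>DA. A x \<in> DB \<and> Pi1 (A x) = Pi1 v \<and> Pi2 (A x) = Pi2 v"
proof -
  obtain x0 where "x0 \<in> DA" and orth: "\<forall>x\<in>DA. hip Y (A x) (v - A x0) = 0"
    using range_orthogonal_decomposition[OF X.complex_hilbert_space_axioms
        Y.complex_hilbert_space_axioms A_lin A_closed A_below] by blast
  define u where "u = v - A x0"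
  have "u \<in> DB" "B u = 0"
    using orthogonal_to_range_in_ker[OF X.complex_hilbert_space_axioms A_dense AB_adj] orth
    by (simp_all add: u_def)
  have "Pi1 u (Lam1 x) = cnj (Lam2 x (Pi2 u))" if "x \<in> DA" for x
  proof -
    have "hip Y u (A x) = 0"
      using orth that Y.hip_commute[of "A x" u] by (simp add: u_def)
    then show ?thesis
      using green[OF \<open>u \<in> DB\<close> that] \<open>B u = 0\<close> by simp
  qed
  then have Pi1_u: "Pi1 u = (\<lambda>_. 0)" and Pi2_u: "Pi2 u = 0"
    using annihilator_of_boundary_values[OF G2.complex_hilbert_space_axioms Lam_surj] by blast+
  have "A x0 \<in> DB"
    using Y.hsubspace_diff[of DB v u] B_lin \<open>v \<in> DB\<close> \<open>u \<in> DB\<close>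
    unfolding hlinear_on_def by (simp add: u_def)
  have "v = A x0 + u" by (simp add: u_def)
  then have "Pi1 v = (\<lambda>g. Pi1 (A x0) g + Pi1 u g)" and "Pi2 v = Pi2 (A x0) + Pi2 u"
    using Pi1_lin Pi2_lin \<open>A x0 \<in> DB\<close> \<open>u \<in> DB\<close>
    unfolding hlinear_to_antidual_def hlinear_on_def by blast+
  then have "Pi1 (A x0) = Pi1 v" and "Pi2 (A x0) = Pi2 v"
    by (simp_all add: Pi1_u Pi2_u)
  then show ?thesis using \<open>x0 \<in> DA\<close> \<open>A x0 \<in> DB\<close> by blast
qed

lemma boundary_map_surj:
  "(\<lambda>f. (Xi0 Lam1 Pi2 f, Xi1 Pi1 Lam2 f)) ` domB1 DA A DB = UNIV \<times> (antidual G1 \<times> antidual G2)"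
proof (intro equalityI subsetI)
  fix p assume "p \<in> (\<lambda>f. (Xi0 Lam1 Pi2 f, Xi1 Pi1 Lam2 f)) ` domB1 DA A DB"
  then obtain v w where "v \<in> DB" "w \<in> DA" "p = (Xi0 Lam1 Pi2 (v, w), Xi1 Pi1 Lam2 (v, w))"
    unfolding domB1_def by auto
  then show "p \<in> UNIV \<times> (antidual G1 \<times> antidual G2)"
    using Pi1_into Lam2_into antidual_uminus[of "Pi1 v"] unfolding Xi1_def by auto
next
  fix p :: "('g1 \<times> 'g2) \<times> ('g1 \<Rightarrow> complex) \<times> ('g2 \<Rightarrow> complex)"
  assume "p \<in> UNIV \<times> (antidual G1 \<times> antidual G2)"
  then obtain g1 g2 \<phi>1 \<phi>2 where p: "p = ((g1, g2), (\<phi>1, \<phi>2))"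
    and "\<phi>1 \<in> antidual G1" "\<phi>2 \<in> antidual G2"
    by auto
  have "(g1, \<phi>2) \<in> (\<lambda>x. (Lam1 x, Lam2 x)) ` DA"
    using Lam_surj \<open>\<phi>2 \<in> antidual G2\<close> by simp
  then obtain w where w: "w \<in> DA" "Lam1 w = g1" "Lam2 w = \<phi>2"
    by auto
  have "(\<lambda>g. - \<phi>1 g, g2) \<in> (\<lambda>y. (Pi1 y, Pi2 y)) ` DB"
    using Pi_surj antidual_uminus[OF \<open>\<phi>1 \<in> antidual G1\<close>] by simp
  then obtain v where v: "v \<in> DB" "Pi1 v = (\<lambda>g. - \<phi>1 g)" "Pi2 v = g2"
    by auto
  obtain x where x: "x \<in> DA" "A x \<in> DB" "Pi1 (A x) = Pi1 v" "Pi2 (A x) = Pi2 v"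
    using boundary_values_attained_on_range[OF \<open>v \<in> DB\<close>] by blast
  have "(A x, w) \<in> domB1 DA A DB" and "p = (Xi0 Lam1 Pi2 (A x, w), Xi1 Pi1 Lam2 (A x, w))"
    using p w v x by (auto simp: domB1_def Xi0_def Xi1_def)
  then show "p \<in> (\<lambda>f. (Xi0 Lam1 Pi2 f, Xi1 Pi1 Lam2 f)) ` domB1 DA A DB" by blast
qed

lemma opB1_green_identity:
  assumes "f \<in> domB1 DA A DB" and "g \<in> domB1 DA A DB"
  shows "hip Y (fst (opB1 A B f)) (fst g) + hip X (snd (opB1 A B f)) (snd g)
       + (hip Y (fst f) (fst (opB1 A B g)) + hip X (snd f) (snd (opB1 A B g)))
       = pair_dual (Xi1 Pi1 Lam2 f) (Xi0 Lam1 Pi2 g)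
       + cnj (pair_dual (Xi1 Pi1 Lam2 g) (Xi0 Lam1 Pi2 f))"
proof -
  obtain v w v' w' where f: "f = (v, w)" "v \<in> DB" "w \<in> DA" and g: "g = (v', w')" "v' \<in> DB" "w' \<in> DA"
    using assms unfolding domB1_def by auto
  have green': "hip X (B y) x + hip Y y (A x) = - Pi1 y (Lam1 x) + cnj (Lam2 x (Pi2 y))"
    if "y \<in> DB" "x \<in> DA" for y x
    using green[OF that] by (simp add: algebra_simps)
  have "hip Y (fst (opB1 A B f)) (fst g) + hip X (snd (opB1 A B f)) (snd g)
       + (hip Y (fst f) (fst (opB1 A B g)) + hip X (snd f) (snd (opB1 A B g)))
     = (hip X (B v) w' + hip Y v (A w')) + cnj (hip X (B v') w + hip Y v' (A w))"
    unfolding f(1) g(1) opB1_def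
    by (simp add: X.hip_commute[of w] Y.hip_commute[of "A w"] algebra_simps)
  also have "\<dots> = (- Pi1 v (Lam1 w') + cnj (Lam2 w' (Pi2 v)))
                  + cnj (- Pi1 v' (Lam1 w) + cnj (Lam2 w (Pi2 v')))"
    by (simp only: green' f g)
  also have "\<dots> = pair_dual (Xi1 Pi1 Lam2 f) (Xi0 Lam1 Pi2 g) + cnj (pair_dual (Xi1 Pi1 Lam2 g) (Xi0 Lam1 Pi2 f))"
    unfolding f(1) g(1) pair_dual_def Xi0_def Xi1_def by (simp add: algebra_simps)
  finally show ?thesis .
qed

end

theorem lemma3p4:
  fixes X :: "('x::ab_group_add) hilb" and Y :: "('y::ab_group_add) hilb"
    and G1 :: "('g1::ab_group_add) hilb" and G2 :: "('g2::ab_group_add) hilb"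
    and DA :: "'x set" and A :: "'x \<Rightarrow> 'y"
    and DB :: "'y set" and B :: "'y \<Rightarrow> 'x"
    and Lam1 :: "'x \<Rightarrow> 'g1" and Lam2 :: "'x \<Rightarrow> 'g2 \<Rightarrow> complex"
    and Pi1 :: "'y \<Rightarrow> 'g1 \<Rightarrow> complex" and Pi2 :: "'y \<Rightarrow> 'g2"
  assumes hX: "complex_hilbert X" and hY: "complex_hilbert Y"
    and hG1: "complex_hilbert G1" and hG2: "complex_hilbert G2"
    and A_lin: "hlinear_on X Y DA A" and A_closed: "hclosed_op X Y DA A"
    and A_dense: "hdense X DA"
    and A_below: "\<exists>c>0. \<forall>x\<in>DA. hnorm Y (A x) \<ge> c * hnorm X x"
    and B_lin: "hlinear_on Y X DB B" and B_closed: "hclosed_op Y X DB B"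
    and B_dense: "hdense Y DB"
    and AB_adj: "adj_subset_neg X Y DA A DB B"
    and Lam1_lin: "hlinear_on X G1 DA Lam1"
    and Lam2_lin: "hlinear_to_antidual X DA Lam2"
    and Lam2_into: "Lam2 ` DA \<subseteq> antidual G2"
    and Lam_surj: "(\<lambda>x. (Lam1 x, Lam2 x)) ` DA = UNIV \<times> antidual G2"
    and Pi1_lin: "hlinear_to_antidual Y DB Pi1"
    and Pi1_into: "Pi1 ` DB \<subseteq> antidual G1"
    and Pi2_lin: "hlinear_on Y G2 DB Pi2"
    and Pi_surj: "(\<lambda>y. (Pi1 y, Pi2 y)) ` DB = antidual G1 \<times> UNIV"
    and green: "\<And>y x. y \<in> DB \<Longrightarrow> x \<in> DA \<Longrightarrow>
       - hip X (B y) x - hip Y y (A x) = Pi1 y (Lam1 x) - cnj (Lam2 x (Pi2 y))"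
  shows "(\<lambda>f. (Xi0 Lam1 Pi2 f, Xi1 Pi1 Lam2 f)) ` domB1 DA A DB
           = UNIV \<times> (antidual G1 \<times> antidual G2)
    \<and> (\<forall>f\<in>domB1 DA A DB. \<forall>g\<in>domB1 DA A DB.
         hip Y (fst (opB1 A B f)) (fst g) + hip X (snd (opB1 A B f)) (snd g)
       + (hip Y (fst f) (fst (opB1 A B g)) + hip X (snd f) (snd (opB1 A B g)))
       = pair_dual (Xi1 Pi1 Lam2 f) (Xi0 Lam1 Pi2 g)
       + cnj (pair_dual (Xi1 Pi1 Lam2 g) (Xi0 Lam1 Pi2 f)))
    \<and> domB1 DA A DB = (\<lambda>z. (A (fst z), snd z)) ` domAA DA A DB
    \<and> (\<forall>z\<in>domAA DA A DB.
         Xi0 Lam1 Pi2 (A (fst z), snd z) = Gamma0 A Lam1 Pi2 z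
       \<and> Xi1 Pi1 Lam2 (A (fst z), snd z) = Gamma1 A Pi1 Lam2 z)"
proof -
  interpret green_operator_pair X Y G1 G2 DA A DB B Lam1 Lam2 Pi1 Pi2
    by (unfold_locales; fact assms)
  have "domB1 DA A DB = (\<lambda>z. (A (fst z), snd z)) ` domAA DA A DB"
    unfolding domB1_def domAA_def by force
  moreover have "\<forall>z\<in>domAA DA A DB.
         Xi0 Lam1 Pi2 (A (fst z), snd z) = Gamma0 A Lam1 Pi2 z
       \<and> Xi1 Pi1 Lam2 (A (fst z), snd z) = Gamma1 A Pi1 Lam2 z"
    unfolding Xi0_def Gamma0_def Xi1_def Gamma1_def by simp
  ultimately show ?thesis
    using boundary_map_surj opB1_green_identity by blast
qed

end
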